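(* Let $n\in\mathbb{N}_0$ and $r\in\mathbb{N}$, let $I$ be an open interval, and let $f_i:I\to\mathbb{R}$ ($i=1,\ldots,r$) and $g:I\to\mathbb{R}$ be functions which have a derivative of order $n$ on $I$. Suppose that $\mathbf{c}=(c_1,\ldots,c_r)\in\mathbb{R}^r$ satisfies $c_1+\cdots+c_r=0$. Then, for every $\mathbf{s}=(s_1,\ldots,s_r)\in(\mathbb{Z}_{\ge0})^r$ with $|\mathbf{s}|\le n$, \[ \sum_{|\mathbf{k}|=n}\binom{n}{\mathbf{k}}\prod_{i=1}^{r}c_i^{k_i}\left(f_i g^{k_i}\right)^{(s_i)}= \begin{cases} 0, & |\mathbf{s}|<n,\\[2mm] n!\left(\prod_{i=1}^{r}c_i^{s_i}\right)\left(\prod_{i=1}^{r}f_i\right)\left(g'\right)^{|\mathbf{s}|}, & |\mathbf{s}|=n. \end{cases} \]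
   Context: For $\mathbf{k}=(k_1,\ldots,k_r)\in\mathbb{Z}^r$, $|\mathbf{k}|=k_1+\cdots+k_r$. The sum $\sum_{|\mathbf{k}|=n}$ runs over all $\mathbf{k}\in(\mathbb{Z}_{\ge0})^r$ with $|\mathbf{k}|=n$, and $\binom{n}{\mathbf{k}}=\frac{n!}{k_1!\cdots k_r!\,(n-|\mathbf{k}|)!}$, i.e. the multinomial coefficient $\frac{n!}{k_1!\cdots k_r!}$ when $|\mathbf{k}|=n$. $h^{(s)}$ denotes the $s$-th derivative of $h$ (with $h^{(0)}=h$), and the conventions $c^0=1$ (including $0^0=1$) and $g^0=1$ are used. *)

theory Defs
  imports "HOL-Analysis.Analysis"
begin

definition has_nth_deriv_on :: "nat \<Rightarrow> (real \<Rightarrow> real) \<Rightarrow> real set \<Rightarrow> bool" where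
  "has_nth_deriv_on n h I \<longleftrightarrow>
     (\<forall>k<n. \<forall>x\<in>I. ((deriv ^^ k) h) differentiable (at x))"

definition multi_indices :: "nat \<Rightarrow> nat \<Rightarrow> (nat \<Rightarrow> nat) set" where
  "multi_indices r n = {k. (\<forall>i. i \<notin> {1..r} \<longrightarrow> k i = 0) \<and> (\<Sum>i=1..r. k i) = n}"

definition multinom :: "nat \<Rightarrow> nat \<Rightarrow> (nat \<Rightarrow> nat) \<Rightarrow> real" where
  "multinom r n k = fact n / (\<Prod>i=1..r. fact (k i))"

end

theory Submission
  imports Defs
begin

text \<open>Induction on \<open>n\<close>. Splitting the multinomial coefficient as
  \<open>(n+1 choose k) = \<Sum>\<^sub>j (n choose k - e\<^sub>j)\<close> writes the sum of order \<open>n+1\<close> as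
  \<open>\<Sum>\<^sub>j c\<^sub>j S\<^sub>j\<close>, where \<open>S\<^sub>j\<close> is the sum of order \<open>n\<close> with \<open>f\<^sub>j\<close> replaced by \<open>f\<^sub>j g\<close>. If
  \<open>|s| \<le> n\<close>, the induction hypothesis gives the same value for every \<open>S\<^sub>j\<close>, so the sum
  vanishes because \<open>\<Sum>\<^sub>j c\<^sub>j = 0\<close>. If \<open>|s| = n+1\<close>, pick \<open>j\<close> with \<open>s\<^sub>j > 0\<close> and
  differentiate the \<open>j\<close>-th factor once:
  \<open>(f\<^sub>j g^k)' = f\<^sub>j' g^k + k f\<^sub>j g' g^(k-1)\<close>. The first part is a sum with \<open>|s| = n\<close>,
  hence zero by the previous case; in the second, the factor \<open>k\<^sub>j\<close> is absorbed into the
  multinomial coefficient, leaving \<open>(n+1) c\<^sub>j\<close> times a sum of order \<open>n\<close> with \<open>f\<^sub>j\<close>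
  replaced by \<open>f\<^sub>j g'\<close>, which the induction hypothesis evaluates.\<close>

section \<open>Higher derivatives on open sets\<close>

lemma field_differentiable_iff_real_differentiable:
  fixes f :: "real \<Rightarrow> real"
  shows "f field_differentiable at x \<longleftrightarrow> f differentiable at x"
  by (simp add: DERIV_deriv_iff_real_differentiable[symmetric]
      DERIV_deriv_iff_field_differentiable[symmetric])

lemma deriv_mult_power:
  fixes a g :: "real \<Rightarrow> real"
  assumes "a differentiable at x" "g differentiable at x"
  shows "deriv (\<lambda>y. a y * g y ^ n) x = deriv a x * g x ^ n + n * (a x * deriv g x * g x ^ (n - 1))"
proof -
  have "((\<lambda>y. a y * g y ^ n) has_real_derivative
          a x * (n * (deriv g x * g x ^ (n - Suc 0))) + deriv a x * g x ^ n) (at x)"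
    using assms unfolding DERIV_deriv_iff_real_differentiable[symmetric]
    by (intro DERIV_mult' DERIV_power) auto
  then show ?thesis
    by (simp add: DERIV_imp_deriv algebra_simps)
qed

lemma has_nth_deriv_on_0 [simp]: "has_nth_deriv_on 0 h I"
  by (simp add: has_nth_deriv_on_def)

lemma has_nth_deriv_on_Suc:
  "has_nth_deriv_on (Suc n) h I \<longleftrightarrow>
     (\<forall>x\<in>I. h differentiable at x) \<and> has_nth_deriv_on n (deriv h) I"
  unfolding has_nth_deriv_on_def
  by (auto simp del: funpow.simps simp: funpow_Suc_right less_Suc_eq_0_disj)

lemma has_nth_deriv_on_mono:
  "m \<le> n \<Longrightarrow> has_nth_deriv_on n h I \<Longrightarrow> has_nth_deriv_on m h I"
  unfolding has_nth_deriv_on_def by auto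

lemma higher_deriv_cong_open:
  assumes "open I" "\<And>y. y \<in> I \<Longrightarrow> a y = b y" "x \<in> I"
  shows "(deriv ^^ k) a x = (deriv ^^ k) b x"
  using eventually_mono[OF eventually_nhds_in_open[OF assms(1,3)]] assms(2)
  by (intro higher_deriv_cong_ev) auto

lemma has_nth_deriv_on_cong:
  assumes "open I" "\<And>y. y \<in> I \<Longrightarrow> a y = b y" "has_nth_deriv_on n a I"
  shows "has_nth_deriv_on n b I"
  unfolding has_nth_deriv_on_def
proof (intro allI impI ballI)
  fix k x assume "k < n" "x \<in> I"
  then obtain D where "((deriv ^^ k) a has_derivative D) (at x)"
    using assms(3) unfolding has_nth_deriv_on_def differentiable_def by blast
  then have "((deriv ^^ k) b has_derivative D) (at x)"
    by (rule has_derivative_transform_within_open[OF _ assms(1) \<open>x \<in> I\<close>])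
       (use higher_deriv_cong_open[OF assms(1,2)] in auto)
  then show "(deriv ^^ k) b differentiable at x"
    unfolding differentiable_def by blast
qed

lemma has_nth_deriv_on_const: "has_nth_deriv_on n (\<lambda>y. K) I"
  by (induction n arbitrary: K) (simp_all add: has_nth_deriv_on_Suc)

lemma has_nth_deriv_on_add:
  assumes "open I" "has_nth_deriv_on n a I" "has_nth_deriv_on n b I"
  shows "has_nth_deriv_on n (\<lambda>y. a y + b y) I"
  using assms(2,3)
proof (induction n arbitrary: a b)
  case (Suc n)
  then have "has_nth_deriv_on n (\<lambda>y. deriv a y + deriv b y) I"
    by (simp add: has_nth_deriv_on_Suc)
  then have "has_nth_deriv_on n (deriv (\<lambda>y. a y + b y)) I"
    by (rule has_nth_deriv_on_cong[OF assms(1), rotated])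
       (use Suc.prems in \<open>auto simp: has_nth_deriv_on_Suc field_differentiable_iff_real_differentiable\<close>)
  with Suc.prems show ?case by (auto simp: has_nth_deriv_on_Suc)
qed simp

lemma has_nth_deriv_on_mult:
  assumes "open I" "has_nth_deriv_on n a I" "has_nth_deriv_on n b I"
  shows "has_nth_deriv_on n (\<lambda>y. a y * b y) I"
  using assms(2,3)
proof (induction n arbitrary: a b)
  case (Suc n)
  have "has_nth_deriv_on n a I" "has_nth_deriv_on n b I"
    using Suc.prems has_nth_deriv_on_mono[of n "Suc n"] by auto
  with Suc have "has_nth_deriv_on n (\<lambda>y. a y * deriv b y + deriv a y * b y) I"
    by (intro has_nth_deriv_on_add assms(1)) (auto simp: has_nth_deriv_on_Suc)
  then have "has_nth_deriv_on n (deriv (\<lambda>y. a y * b y)) I"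
    by (rule has_nth_deriv_on_cong[OF assms(1), rotated])
       (use Suc.prems in \<open>auto simp: has_nth_deriv_on_Suc field_differentiable_iff_real_differentiable\<close>)
  with Suc.prems show ?case by (auto simp: has_nth_deriv_on_Suc)
qed simp

lemma has_nth_deriv_on_power:
  assumes "open I" "has_nth_deriv_on n g I"
  shows "has_nth_deriv_on n (\<lambda>y. g y ^ k) I"
  by (induction k) (simp_all add: has_nth_deriv_on_const has_nth_deriv_on_mult[OF assms])

lemma higher_deriv_add_open:
  assumes "open I" "has_nth_deriv_on n a I" "has_nth_deriv_on n b I" "x \<in> I"
  shows "(deriv ^^ n) (\<lambda>y. a y + b y) x = (deriv ^^ n) a x + (deriv ^^ n) b x"
  using assms(2-4)
proof (induction n arbitrary: a b)
  case (Suc n)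
  have "(deriv ^^ n) (deriv (\<lambda>y. a y + b y)) x = (deriv ^^ n) (\<lambda>y. deriv a y + deriv b y) x"
    by (rule higher_deriv_cong_open[OF assms(1) _ Suc.prems(3)])
       (use Suc.prems in \<open>auto simp: has_nth_deriv_on_Suc field_differentiable_iff_real_differentiable\<close>)
  also have "\<dots> = (deriv ^^ n) (deriv a) x + (deriv ^^ n) (deriv b) x"
    using Suc by (simp add: has_nth_deriv_on_Suc)
  finally show ?case by (simp del: funpow.simps add: funpow_Suc_right)
qed simp

lemma higher_deriv_cmult_open:
  assumes "open I" "has_nth_deriv_on n a I" "x \<in> I"
  shows "(deriv ^^ n) (\<lambda>y. K * a y) x = K * (deriv ^^ n) a x"
  using assms(2-3)
proof (induction n arbitrary: a)
  case (Suc n)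
  have "(deriv ^^ n) (deriv (\<lambda>y. K * a y)) x = (deriv ^^ n) (\<lambda>y. K * deriv a y) x"
    by (rule higher_deriv_cong_open[OF assms(1) _ Suc.prems(2)])
       (use Suc.prems in \<open>auto simp: has_nth_deriv_on_Suc field_differentiable_iff_real_differentiable\<close>)
  also have "\<dots> = K * (deriv ^^ n) (deriv a) x"
    using Suc by (simp add: has_nth_deriv_on_Suc)
  finally show ?case by (simp del: funpow.simps add: funpow_Suc_right)
qed simp

section \<open>Multi-indices\<close>

lemma (in comm_monoid_set) remove_cong:
  assumes "finite A" "j \<in> A" "\<And>i. i \<in> A \<Longrightarrow> i \<noteq> j \<Longrightarrow> g i = h i"
  shows "F g A = g j \<^bold>* F h (A - {j})"
  unfolding remove[OF assms(1,2), of g] using assms(3) by (auto intro!: cong)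

lemma finite_multi_indices: "finite (multi_indices r n)"
proof (rule finite_subset)
  show "multi_indices r n \<subseteq> {k. \<forall>i. (i \<in> {1..r} \<longrightarrow> k i \<in> {0..n}) \<and> (i \<notin> {1..r} \<longrightarrow> k i = 0)}"
    unfolding multi_indices_def using member_le_sum[of _ "{1..r}"] by fastforce
qed (intro finite_set_of_finite_funs; simp)

lemma multi_indices_0: "multi_indices r 0 = {\<lambda>_. 0}"
  unfolding multi_indices_def by (auto simp: fun_eq_iff) (metis atLeastAtMost_iff)

lemma multi_indices_increment:
  assumes "j \<in> {1..r}" "k \<in> multi_indices r n"
  shows "k(j := Suc (k j)) \<in> multi_indices r (Suc n)"
  using assms sum.remove[of "{1..r}" j "k(j := Suc (k j))"] sum.remove[of "{1..r}" j k]
  unfolding multi_indices_def by auto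

lemma multi_indices_decrement:
  assumes "j \<in> {1..r}" "k \<in> multi_indices r (Suc n)" "k j = Suc m"
  shows "k(j := m) \<in> multi_indices r n"
  using assms sum.remove[of "{1..r}" j "k(j := m)"] sum.remove[of "{1..r}" j k]
  unfolding multi_indices_def by auto

lemma multinom_increment:
  assumes "j \<in> {1..r}"
  shows "multinom r (Suc n) (k(j := Suc (k j))) * Suc (k j) = Suc n * multinom r n k"
proof -
  let ?P = "\<Prod>i=1..r. fact (k i) :: real"
  have "(\<Prod>i=1..r. fact ((k(j := Suc (k j))) i) :: real) = Suc (k j) * ?P"
    using assms prod.remove[of "{1..r}" j "\<lambda>i. fact ((k(j := Suc (k j))) i) :: real"]
      prod.remove[of "{1..r}" j "\<lambda>i. fact (k i) :: real"]
    by (simp add: fact_Suc del: of_nat_Suc)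
  moreover have "?P \<noteq> 0"
    by simp
  ultimately show ?thesis
    unfolding multinom_def by (simp add: fact_Suc[of n] del: of_nat_Suc)
qed

lemma sum_multi_indices_Suc_weighted:
  assumes j: "j \<in> {1..r}"
  shows "(\<Sum>k\<in>multi_indices r (Suc n). multinom r (Suc n) k * k j * F k)
       = Suc n * (\<Sum>k\<in>multi_indices r n. multinom r n k * F (k(j := Suc (k j))))"
proof -
  have "(\<Sum>k\<in>multi_indices r (Suc n). multinom r (Suc n) k * k j * F k)
      = (\<Sum>k\<in>{k\<in>multi_indices r (Suc n). k j \<noteq> 0}. multinom r (Suc n) k * k j * F k)"
    by (rule sum.mono_neutral_right) (auto simp: finite_multi_indices)
  also have "\<dots> = (\<Sum>k\<in>multi_indices r n. Suc n * (multinom r n k * F (k(j := Suc (k j)))))"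
    by (rule sym, rule sum.reindex_bij_witness[where j="\<lambda>k. k(j := Suc (k j))" and i="\<lambda>k. k(j := k j - 1)"])
       (auto simp: multi_indices_increment[OF j] multinom_increment[OF j] simp del: of_nat_Suc
         intro: multi_indices_decrement[OF j])
  finally show ?thesis
    by (simp add: sum_distrib_left)
qed

lemma sum_multi_indices_Suc:
  "(\<Sum>k\<in>multi_indices r (Suc n). multinom r (Suc n) k * F k)
   = (\<Sum>j=1..r. \<Sum>k\<in>multi_indices r n. multinom r n k * F (k(j := Suc (k j))))"
proof -
  have "Suc n * (\<Sum>k\<in>multi_indices r (Suc n). multinom r (Suc n) k * F k)
      = (\<Sum>k\<in>multi_indices r (Suc n). \<Sum>j=1..r. multinom r (Suc n) k * k j * F k)"
    unfolding sum_distrib_left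
  proof (rule sum.cong[OF refl])
    fix k assume "k \<in> multi_indices r (Suc n)"
    then have "real (Suc n) = (\<Sum>j=1..r. real (k j))"
      unfolding multi_indices_def by (simp flip: of_nat_sum)
    then show "Suc n * (multinom r (Suc n) k * F k) = (\<Sum>j=1..r. multinom r (Suc n) k * k j * F k)"
      by (simp add: sum_distrib_left sum_distrib_right mult_ac del: of_nat_Suc)
  qed
  also have "\<dots> = (\<Sum>j=1..r. Suc n * (\<Sum>k\<in>multi_indices r n. multinom r n k * F (k(j := Suc (k j)))))"
    by (subst sum.swap) (simp add: sum_multi_indices_Suc_weighted del: of_nat_Suc)
  finally show ?thesis
    by (simp add: sum_distrib_left[symmetric] del: of_nat_Suc)
qed

section \<open>The multinomial sum of derivatives\<close>

definition deriv_term ::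
    "nat \<Rightarrow> (nat \<Rightarrow> real) \<Rightarrow> (real \<Rightarrow> real) \<Rightarrow> (nat \<Rightarrow> real \<Rightarrow> real) \<Rightarrow> (nat \<Rightarrow> nat) \<Rightarrow> real
       \<Rightarrow> (nat \<Rightarrow> nat) \<Rightarrow> real" where
  "deriv_term r c g f s x k = (\<Prod>i=1..r. c i ^ k i * (deriv ^^ s i) (\<lambda>y. f i y * g y ^ k i) x)"

definition multinomial_deriv_sum ::
    "nat \<Rightarrow> nat \<Rightarrow> (nat \<Rightarrow> real) \<Rightarrow> (real \<Rightarrow> real) \<Rightarrow> (nat \<Rightarrow> real \<Rightarrow> real) \<Rightarrow> (nat \<Rightarrow> nat)
       \<Rightarrow> real \<Rightarrow> real" where
  "multinomial_deriv_sum r n c g f s x =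
     (\<Sum>k\<in>multi_indices r n. multinom r n k * deriv_term r c g f s x k)"

lemma deriv_term_increment:
  assumes "j \<in> {1..r}"
  shows "deriv_term r c g f s x (k(j := Suc (k j))) =
           c j * deriv_term r c g (f(j := \<lambda>y. f j y * g y)) s x k"
proof -
  let ?R = "\<Prod>i\<in>{1..r}-{j}. c i ^ k i * (deriv ^^ s i) (\<lambda>y. f i y * g y ^ k i) x"
  have "deriv_term r c g f s x (k(j := Suc (k j))) =
          c j ^ Suc (k j) * (deriv ^^ s j) (\<lambda>y. f j y * g y ^ Suc (k j)) x * ?R"
    unfolding deriv_term_def using assms by (subst prod.remove[of _ j]) (auto intro!: prod.cong)
  moreover have "deriv_term r c g (f(j := \<lambda>y. f j y * g y)) s x k =
          c j ^ k j * (deriv ^^ s j) (\<lambda>y. f j y * g y * g y ^ k j) x * ?R"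
    unfolding deriv_term_def using assms by (subst prod.remove[of _ j]) (auto intro!: prod.cong)
  ultimately show ?thesis
    by (simp add: mult_ac)
qed

lemma deriv_term_shift_deriv:
  assumes I: "open I" and x: "x \<in> I" and j: "j \<in> {1..r}" and sj: "s j = Suc m"
    and f: "has_nth_deriv_on (Suc m) (f j) I" and g: "has_nth_deriv_on (Suc m) g I"
  shows "deriv_term r c g f s x k =
           deriv_term r c g (f(j := deriv (f j))) (s(j := m)) x k
           + k j * c j * deriv_term r c g (f(j := \<lambda>y. f j y * deriv g y)) (s(j := m)) x (k(j := k j - 1))"
  \<comment> \<open>\<open>k j - 1\<close> truncates at \<open>0\<close>, harmlessly, because of the factor \<open>k j\<close>\<close>
proof -
  define A where "A = (\<lambda>y. deriv (f j) y * g y ^ k j)"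
  define B where "B = (\<lambda>y. f j y * deriv g y * g y ^ (k j - 1))"
  let ?R = "\<Prod>i\<in>{1..r}-{j}. c i ^ k i * (deriv ^^ s i) (\<lambda>y. f i y * g y ^ k i) x"
  have A: "has_nth_deriv_on m A I" and B: "has_nth_deriv_on m B I"
    using f g has_nth_deriv_on_mono[of m "Suc m"] unfolding A_def B_def
    by (auto simp: has_nth_deriv_on_Suc intro!: has_nth_deriv_on_mult has_nth_deriv_on_power I)
  have "(deriv ^^ Suc m) (\<lambda>y. f j y * g y ^ k j) x = (deriv ^^ m) (\<lambda>y. A y + k j * B y) x"
    unfolding funpow_Suc_right comp_def A_def B_def
    by (rule higher_deriv_cong_open[OF I _ x])
       (use f g in \<open>auto simp: has_nth_deriv_on_Suc deriv_mult_power\<close>)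
  also have "\<dots> = (deriv ^^ m) A x + (deriv ^^ m) (\<lambda>y. k j * B y) x"
    using higher_deriv_add_open[OF I A has_nth_deriv_on_mult[OF I has_nth_deriv_on_const B] x] .
  also have "(deriv ^^ m) (\<lambda>y. k j * B y) x = k j * (deriv ^^ m) B x"
    by (rule higher_deriv_cmult_open[OF I B x])
  finally have higher_deriv_eq:
    "(deriv ^^ Suc m) (\<lambda>y. f j y * g y ^ k j) x = (deriv ^^ m) A x + k j * (deriv ^^ m) B x" .
  have "deriv_term r c g f s x k = c j ^ k j * (deriv ^^ Suc m) (\<lambda>y. f j y * g y ^ k j) x * ?R"
    unfolding deriv_term_def using j sj by (subst prod.remove[of _ j]) auto
  moreover have "deriv_term r c g (f(j := deriv (f j))) (s(j := m)) x k = c j ^ k j * (deriv ^^ m) A x * ?R"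
    unfolding deriv_term_def A_def using j by (subst prod.remove[of _ j]) (auto intro!: prod.cong)
  moreover have "deriv_term r c g (f(j := \<lambda>y. f j y * deriv g y)) (s(j := m)) x (k(j := k j - 1)) =
      c j ^ (k j - 1) * (deriv ^^ m) B x * ?R"
    unfolding deriv_term_def B_def using j by (subst prod.remove[of _ j]) (auto intro!: prod.cong)
  ultimately show ?thesis
    unfolding higher_deriv_eq by (cases "k j") (simp_all add: algebra_simps)
qed

lemma multinomial_deriv_sum_Suc:
  "multinomial_deriv_sum r (Suc n) c g f s x =
     (\<Sum>j=1..r. c j * multinomial_deriv_sum r n c g (f(j := \<lambda>y. f j y * g y)) s x)"
  unfolding multinomial_deriv_sum_def sum_multi_indices_Suc
  by (auto simp: deriv_term_increment sum_distrib_left mult_ac intro!: sum.cong)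

lemma multinomial_deriv_sum_shift_deriv:
  fixes c :: "nat \<Rightarrow> real"
  assumes "open I" "x \<in> I" "j \<in> {1..r}" "s j = Suc m"
    and "has_nth_deriv_on (Suc m) (f j) I" "has_nth_deriv_on (Suc m) g I"
  shows "multinomial_deriv_sum r (Suc n) c g f s x =
           multinomial_deriv_sum r (Suc n) c g (f(j := deriv (f j))) (s(j := m)) x
           + Suc n * c j * multinomial_deriv_sum r n c g (f(j := \<lambda>y. f j y * deriv g y)) (s(j := m)) x"
proof -
  define H where "H k = c j * deriv_term r c g (f(j := \<lambda>y. f j y * deriv g y)) (s(j := m)) x (k(j := k j - 1))"
    for k
  have "multinomial_deriv_sum r (Suc n) c g f s x =
          multinomial_deriv_sum r (Suc n) c g (f(j := deriv (f j))) (s(j := m)) x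
          + (\<Sum>k\<in>multi_indices r (Suc n). multinom r (Suc n) k * k j * H k)"
    unfolding multinomial_deriv_sum_def H_def deriv_term_shift_deriv[where f=f and s=s, OF assms]
    by (simp add: sum.distrib algebra_simps)
  also have "(\<Sum>k\<in>multi_indices r (Suc n). multinom r (Suc n) k * k j * H k) =
      Suc n * c j * multinomial_deriv_sum r n c g (f(j := \<lambda>y. f j y * deriv g y)) (s(j := m)) x"
    unfolding sum_multi_indices_Suc_weighted[OF assms(3)] multinomial_deriv_sum_def H_def
    by (simp add: sum_distrib_left mult_ac)
  finally show ?thesis .
qed

lemma multinomial_deriv_sum_Suc_eq_0:
  fixes c :: "nat \<Rightarrow> real"
  assumes I: "open I" and c: "(\<Sum>i=1..r. c i) = 0" and g: "has_nth_deriv_on n g I"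
    and h: "\<And>i. i \<in> {1..r} \<Longrightarrow> has_nth_deriv_on n (h i) I" and t: "(\<Sum>i=1..r. t i) \<le> n"
    and IH: "\<And>f t. (\<And>i. i \<in> {1..r} \<Longrightarrow> has_nth_deriv_on n (f i) I) \<Longrightarrow> (\<Sum>i=1..r. t i) \<le> n \<Longrightarrow>
      multinomial_deriv_sum r n c g f t x =
        (if (\<Sum>i=1..r. t i) < n then 0
         else fact n * (\<Prod>i=1..r. c i ^ t i) * (\<Prod>i=1..r. f i x) * deriv g x ^ (\<Sum>i=1..r. t i))"
  shows "multinomial_deriv_sum r (Suc n) c g h t x = 0"
proof -
  define v where "v = (if (\<Sum>i=1..r. t i) < n then 0
    else fact n * (\<Prod>i=1..r. c i ^ t i) * (g x * (\<Prod>i=1..r. h i x)) * deriv g x ^ (\<Sum>i=1..r. t i))"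
  have "multinomial_deriv_sum r n c g (h(j := \<lambda>y. h j y * g y)) t x = v" if j: "j \<in> {1..r}" for j
  proof -
    have hj: "has_nth_deriv_on n ((h(j := \<lambda>y. h j y * g y)) i) I" if "i \<in> {1..r}" for i
      using h[OF that] h[OF j] g by (simp add: has_nth_deriv_on_mult I)
    have "(\<Prod>i=1..r. (h(j := \<lambda>y. h j y * g y)) i x) = g x * (\<Prod>i=1..r. h i x)"
      using j prod.remove_cong[of "{1..r}" j "\<lambda>i. (h(j := \<lambda>y. h j y * g y)) i x" "\<lambda>i. h i x"]
        prod.remove[of "{1..r}" j "\<lambda>i. h i x"]
      by simp
    then show ?thesis
      using IH[where f="h(j := \<lambda>y. h j y * g y)", OF hj t] unfolding v_def by simp
  qed
  then have "multinomial_deriv_sum r (Suc n) c g h t x = (\<Sum>j=1..r. c j) * v"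
    by (simp add: multinomial_deriv_sum_Suc sum_distrib_right)
  with c show ?thesis
    by simp
qed

lemma multinomial_deriv_sum_Suc_top_order:
  fixes c :: "nat \<Rightarrow> real"
  assumes I: "open I" and x: "x \<in> I" and c: "(\<Sum>i=1..r. c i) = 0"
    and f: "\<And>i. i \<in> {1..r} \<Longrightarrow> has_nth_deriv_on (Suc n) (f i) I"
    and g: "has_nth_deriv_on (Suc n) g I"
    and s: "(\<Sum>i=1..r. s i) = Suc n"
    and IH: "\<And>h t. (\<And>i. i \<in> {1..r} \<Longrightarrow> has_nth_deriv_on n (h i) I) \<Longrightarrow> (\<Sum>i=1..r. t i) \<le> n \<Longrightarrow>
      multinomial_deriv_sum r n c g h t x =
        (if (\<Sum>i=1..r. t i) < n then 0
         else fact n * (\<Prod>i=1..r. c i ^ t i) * (\<Prod>i=1..r. h i x) * deriv g x ^ (\<Sum>i=1..r. t i))"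
  shows "multinomial_deriv_sum r (Suc n) c g f s x =
           fact (Suc n) * (\<Prod>i=1..r. c i ^ s i) * (\<Prod>i=1..r. f i x) * deriv g x ^ Suc n"
proof -
  obtain j m where j: "j \<in> {1..r}" and sj: "s j = Suc m"
    using s by (metis Zero_not_Suc not0_implies_Suc sum.neutral)
  have fj: "has_nth_deriv_on (Suc m) (f j) I" and gm: "has_nth_deriv_on (Suc m) g I"
    using f[OF j] g member_le_sum[of j "{1..r}" s] has_nth_deriv_on_mono[of "Suc m" "Suc n"] j sj s
    by auto
  have gn: "has_nth_deriv_on n g I" "has_nth_deriv_on n (deriv g) I"
    using g has_nth_deriv_on_mono[of n "Suc n"] by (auto simp: has_nth_deriv_on_Suc)
  define s' where "s' = s(j := m)"
  have s': "(\<Sum>i=1..r. s' i) = n"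
    using j sj s sum.remove_cong[of "{1..r}" j s' s] sum.remove[of "{1..r}" j s]
    by (simp add: s'_def)
  have f1: "has_nth_deriv_on n ((f(j := deriv (f j))) i) I" if "i \<in> {1..r}" for i
    using f[OF that] f[OF j] has_nth_deriv_on_mono[of n "Suc n"]
    by (auto simp: has_nth_deriv_on_Suc)
  have f2: "has_nth_deriv_on n ((f(j := \<lambda>y. f j y * deriv g y)) i) I" if "i \<in> {1..r}" for i
    using f[OF that] f[OF j] has_nth_deriv_on_mono[of n "Suc n"] gn
    by (auto intro: has_nth_deriv_on_mult I)
  have c_prod: "c j * (\<Prod>i=1..r. c i ^ s' i) = (\<Prod>i=1..r. c i ^ s i)"
    using j sj prod.remove_cong[of "{1..r}" j "\<lambda>i. c i ^ s' i" "\<lambda>i. c i ^ s i"]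
      prod.remove[of "{1..r}" j "\<lambda>i. c i ^ s i"]
    by (simp add: s'_def)
  have f_prod: "(\<Prod>i=1..r. (f(j := \<lambda>y. f j y * deriv g y)) i x) = deriv g x * (\<Prod>i=1..r. f i x)"
    using j prod.remove_cong[of "{1..r}" j "\<lambda>i. (f(j := \<lambda>y. f j y * deriv g y)) i x" "\<lambda>i. f i x"]
      prod.remove[of "{1..r}" j "\<lambda>i. f i x"]
    by simp
  have "multinomial_deriv_sum r (Suc n) c g (f(j := deriv (f j))) s' x = 0"
    using multinomial_deriv_sum_Suc_eq_0[where h="f(j := deriv (f j))", OF I c gn(1) f1 s'[THEN eq_imp_le] IH] .
  then have "multinomial_deriv_sum r (Suc n) c g f s x =
          Suc n * c j * multinomial_deriv_sum r n c g (f(j := \<lambda>y. f j y * deriv g y)) s' x"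
    using multinomial_deriv_sum_shift_deriv[where f=f and s=s, OF I x j sj fj gm] by (simp add: s'_def)
  also have "\<dots> = Suc n * c j * (fact n * (\<Prod>i=1..r. c i ^ s' i) * (deriv g x * (\<Prod>i=1..r. f i x)) * deriv g x ^ n)"
    using IH[where h="f(j := \<lambda>y. f j y * deriv g y)" and t=s', OF f2 s'[THEN eq_imp_le]]
    unfolding f_prod s' by (simp only: less_irrefl if_False)
  finally show ?thesis
    unfolding c_prod[symmetric] by (simp add: algebra_simps del: of_nat_Suc)
qed

lemma multinomial_deriv_sum_eq:
  fixes c :: "nat \<Rightarrow> real"
  assumes I: "open I" and x: "x \<in> I" and c: "(\<Sum>i=1..r. c i) = 0"
    and "\<And>i. i \<in> {1..r} \<Longrightarrow> has_nth_deriv_on n (f i) I" and "has_nth_deriv_on n g I"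
    and "(\<Sum>i=1..r. s i) \<le> n"
  shows "multinomial_deriv_sum r n c g f s x =
           (if (\<Sum>i=1..r. s i) < n then 0
            else fact n * (\<Prod>i=1..r. c i ^ s i) * (\<Prod>i=1..r. f i x) * deriv g x ^ (\<Sum>i=1..r. s i))"
  using assms(4-6)
proof (induction n arbitrary: f s)
  case 0
  then show ?case
    by (simp add: multinomial_deriv_sum_def multi_indices_0 multinom_def deriv_term_def)
next
  case (Suc n)
  show ?case
  proof (cases "(\<Sum>i=1..r. s i) \<le> n")
    case True
    have "has_nth_deriv_on n g I" "\<And>i. i \<in> {1..r} \<Longrightarrow> has_nth_deriv_on n (f i) I"
      using Suc.prems(1,2) has_nth_deriv_on_mono[of n "Suc n"] by auto
    with True show ?thesis
      using multinomial_deriv_sum_Suc_eq_0[OF I c] Suc.IH by simp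
  next
    case False
    then have s: "(\<Sum>i=1..r. s i) = Suc n"
      using Suc.prems(3) by simp
    have "has_nth_deriv_on n g I"
      using Suc.prems(2) has_nth_deriv_on_mono[of n "Suc n"] by auto
    with s show ?thesis
      using multinomial_deriv_sum_Suc_top_order[OF I x c Suc.prems(1,2) s Suc.IH] by simp
  qed
qed

theorem corollary2:
  fixes n r :: nat and I :: "real set"
    and f :: "nat \<Rightarrow> real \<Rightarrow> real" and g :: "real \<Rightarrow> real"
    and c :: "nat \<Rightarrow> real" and s :: "nat \<Rightarrow> nat" and x :: real
  assumes "r \<ge> 1"
    and "open I" and "is_interval I"
    and "\<And>i. i \<in> {1..r} \<Longrightarrow> has_nth_deriv_on n (f i) I"
    and "has_nth_deriv_on n g I"
    and "(\<Sum>i=1..r. c i) = 0"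
    and "(\<Sum>i=1..r. s i) \<le> n"
    and "x \<in> I"
  shows "(\<Sum>k\<in>multi_indices r n. multinom r n k *
            (\<Prod>i=1..r. c i ^ k i * (deriv ^^ s i) (\<lambda>y. f i y * g y ^ k i) x))
         = (if (\<Sum>i=1..r. s i) < n then 0
            else fact n * (\<Prod>i=1..r. c i ^ s i) * (\<Prod>i=1..r. f i x)
                 * deriv g x ^ (\<Sum>i=1..r. s i))"
  using multinomial_deriv_sum_eq[OF assms(2,8,6,4,5,7)]
  unfolding multinomial_deriv_sum_def deriv_term_def .

end
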